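(* Let $k,\ell$ be positive integers. For integers $0\le j\le k$ define $$\left\langle \begin{matrix} k \\ j \end{matrix} \right\rangle (x, s, q, \ell) = \frac{\prod_{i=1}^k f(i\ell, x, s)}{\prod_{i=1}^j f(i\ell, x, q^{(j-i)\ell}s) \prod_{i=1}^{k-j} f(i\ell, x, q^{j\ell}s)}.$$ Then for all $n\in\mathbb{Z}$, $$\sum_{j=0}^{k+1} (-1)^{j+\ell \binom{j}{2}} \left( q^{\frac{(4j+1)\ell-3}{6}} s \right)^{\ell\binom{j}{2}} \left\langle \begin{matrix} k+1 \\ j \end{matrix} \right\rangle (x, s, q, \ell)\, f(n - j\ell, x, q^{j\ell} s)^k = 0.$$
   Context: Let $x,s,q$ be indeterminates; all quantities live in the field of rational functions in $x,s,q$. The Carlitz $q$-Fibonacci polynomials $f(n,x,s)$ are defined by $f(0,x,s)=0$, $f(1,x,s)=1$ and $f(n, x, s) = x f(n-1, x, s) + q^{n-2} s f(n-2, x, s)$; this recurrence is required to hold for all $n\in\mathbb{Z}$, which uniquely extends $f(n,x,s)$ to negative $n$. Here $f(n,x,q^a s)$ means $f(n,x,s)$ with $s$ replaced by $q^a s$. *)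

theory Defs
  imports "HOL-Computational_Algebra.Polynomial" "HOL-Computational_Algebra.Fraction_Field"
begin

text \<open>The field of rational functions Q(x,s,q) = Frac(Z[x,s,q]), realised as the
fraction field of nested univariate polynomials: the outermost variable is q,
the middle one s, the innermost one x.\<close>

type_synonym rf = "int poly poly poly fract"

definition qv :: rf where "qv = Fract [:0, 1:] 1"
definition sv :: rf where "sv = Fract [:[:0, 1:]:] 1"
definition xv :: rf where "xv = Fract [:[:[:0, 1:]:]:] 1"

definition carlitz_f :: "'a::field \<Rightarrow> int \<Rightarrow> 'a \<Rightarrow> 'a \<Rightarrow> 'a" where
  "carlitz_f q n x s =
     (THE g. g 0 = 0 \<and> g 1 = 1 \<and>
        (\<forall>m::int. g m = x * g (m - 1) + q powi (m - 2) * s * g (m - 2))) n"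

definition carlitz_bracket :: "'a::field \<Rightarrow> nat \<Rightarrow> nat \<Rightarrow> 'a \<Rightarrow> 'a \<Rightarrow> nat \<Rightarrow> 'a" where
  "carlitz_bracket q k j x s l =
     (\<Prod>i=1..k. carlitz_f q (int (i * l)) x s) /
     ((\<Prod>i=1..j. carlitz_f q (int (i * l)) x (q ^ ((j - i) * l) * s)) *
      (\<Prod>i=1..k - j. carlitz_f q (int (i * l)) x (q ^ (j * l) * s)))"

end

theory Submission
  imports Defs
begin

text \<open>Each shifted sequence \<open>u\<^sub>j(n) = f(n - j l, x, q\<^sup>j\<^sup>l s)\<close> satisfies the recurrence of
  \<open>f(n, x, s)\<close>, hence \<open>u\<^sub>j = A\<^sub>j f + B\<^sub>j g\<close> for a fixed second solution \<open>g\<close>, with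
  \<open>(A\<^sub>j, B\<^sub>j) = (u\<^sub>j(1), u\<^sub>j(0))\<close>. For \<open>k + 2\<close> points in general position, homogeneous
  Lagrange interpolation gives
  \<open>\<Sum>\<^sub>j (A\<^sub>j X + B\<^sub>j Y)\<^sup>k / \<Prod>\<^sub>m\<^sub>\<noteq>\<^sub>j (A\<^sub>j B\<^sub>m - A\<^sub>m B\<^sub>j) = 0\<close>.
  The Casoratian of two solutions gets multiplied by \<open>-q\<^sup>N s\<close> in the step \<open>N \<rightarrow> N + 1\<close>;
  evaluating it at \<open>m l\<close>, where \<open>u\<^sub>m\<close> takes the values \<open>0, 1\<close>, turns each determinant
  \<open>A\<^sub>j B\<^sub>m - A\<^sub>m B\<^sub>j\<close> into a single Carlitz polynomial \<open>f((m - j) l, x, q\<^sup>j\<^sup>l s)\<close>. The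
  products of these are the denominators of the brackets, and the powers of \<open>q\<close> and \<open>s\<close>
  in the identity are what the Casoratian factors leave over. Over \<open>\<rat>(x, s, q)\<close> the
  determinants do not vanish because \<open>f(m) \<equiv> x\<^sup>m\<^sup>-\<^sup>1\<close> modulo \<open>s\<close>.\<close>

definition solves_carlitz_rec :: "'a::field \<Rightarrow> 'a \<Rightarrow> 'a \<Rightarrow> (int \<Rightarrow> 'a) \<Rightarrow> bool" where
  "solves_carlitz_rec q x s g \<longleftrightarrow> (\<forall>m. g m = x * g (m - 1) + q powi (m - 2) * s * g (m - 2))"

lemma solves_carlitz_recD:
  "solves_carlitz_rec q x s g \<Longrightarrow> g m = x * g (m - 1) + q powi (m - 2) * s * g (m - 2)"
  unfolding solves_carlitz_rec_def by blast

lemma solves_carlitz_rec_unique: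
  fixes q x s :: "'a::field"
  assumes "q \<noteq> 0" "s \<noteq> 0" and g: "solves_carlitz_rec q x s g" and h: "solves_carlitz_rec q x s h"
    and "g 0 = h 0" "g 1 = h 1"
  shows "g = h"
proof
  fix i :: int
  have "g i = h i \<and> g (i + 1) = h (i + 1)"
  proof (induction i rule: int_induct[where k = 0])
    case base
    then show ?case using assms by simp
  next
    case (step1 i)
    have "g (i + 2) = h (i + 2)"
      using solves_carlitz_recD[OF g, of "i + 2"] solves_carlitz_recD[OF h, of "i + 2"] step1
      by (simp add: ac_simps)
    then show ?case using step1 by (simp add: ac_simps)
  next
    case (step2 i)
    have "q powi (i - 1) * s * g (i - 1) = q powi (i - 1) * s * h (i - 1)"
      using solves_carlitz_recD[OF g, of "i + 1"] solves_carlitz_recD[OF h, of "i + 1"] step2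
      by (simp add: algebra_simps)
    then show ?case using assms step2 by simp
  qed
  then show "g i = h i" ..
qed

fun carlitz_up :: "'a::field \<Rightarrow> 'a \<Rightarrow> 'a \<Rightarrow> 'a \<Rightarrow> 'a \<Rightarrow> nat \<Rightarrow> 'a" where
  "carlitz_up q x s a b 0 = a"
| "carlitz_up q x s a b (Suc 0) = b"
| "carlitz_up q x s a b (Suc (Suc n)) =
     x * carlitz_up q x s a b (Suc n) + q ^ n * s * carlitz_up q x s a b n"

fun carlitz_down :: "'a::field \<Rightarrow> 'a \<Rightarrow> 'a \<Rightarrow> 'a \<Rightarrow> 'a \<Rightarrow> nat \<Rightarrow> 'a" where
  "carlitz_down q x s a b 0 = b"
| "carlitz_down q x s a b (Suc 0) = a"
| "carlitz_down q x s a b (Suc (Suc n)) =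
     (carlitz_down q x s a b n - x * carlitz_down q x s a b (Suc n)) / (q powi (- 1 - int n) * s)"

definition carlitz_sol :: "'a::field \<Rightarrow> 'a \<Rightarrow> 'a \<Rightarrow> 'a \<Rightarrow> 'a \<Rightarrow> int \<Rightarrow> 'a" where
  "carlitz_sol q x s a b m =
     (if 0 \<le> m then carlitz_up q x s a b (nat m) else carlitz_down q x s a b (nat (1 - m)))"

lemma carlitz_sol_0 [simp]: "carlitz_sol q x s a b 0 = a"
  and carlitz_sol_1 [simp]: "carlitz_sol q x s a b 1 = b"
  by (simp_all add: carlitz_sol_def)

lemma carlitz_sol_up: "carlitz_sol q x s a b (int n) = carlitz_up q x s a b n"
  by (simp add: carlitz_sol_def)

lemma carlitz_sol_down: "carlitz_sol q x s a b (1 - int n) = carlitz_down q x s a b n"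
  by (cases "n \<le> 1") (auto simp: carlitz_sol_def le_Suc_eq)

lemma solves_carlitz_rec_carlitz_sol:
  fixes q x s :: "'a::field"
  assumes "q \<noteq> 0" "s \<noteq> 0"
  shows "solves_carlitz_rec q x s (carlitz_sol q x s a b)"
  unfolding solves_carlitz_rec_def
proof
  fix m :: int
  show "carlitz_sol q x s a b m =
        x * carlitz_sol q x s a b (m - 1) + q powi (m - 2) * s * carlitz_sol q x s a b (m - 2)"
  proof (cases "m \<ge> 2")
    case True
    define n where "n = nat (m - 2)"
    have m: "m = int n + 2" using True n_def by simp
    have "carlitz_sol q x s a b (int (Suc (Suc n))) =
          x * carlitz_sol q x s a b (int (Suc n)) + q ^ n * s * carlitz_sol q x s a b (int n)"
      unfolding carlitz_sol_up by simp
    then show ?thesis by (simp add: m add.commute)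
  next
    case False
    define n where "n = nat (1 - m)"
    have m: "m = 1 - int n" using False n_def by simp
    have "carlitz_sol q x s a b m = carlitz_down q x s a b n"
      "carlitz_sol q x s a b (m - 1) = carlitz_down q x s a b (Suc n)"
      "carlitz_sol q x s a b (m - 2) = carlitz_down q x s a b (Suc (Suc n))"
      using carlitz_sol_down[of q x s a b n] carlitz_sol_down[of q x s a b "Suc n"]
        carlitz_sol_down[of q x s a b "Suc (Suc n)"] m
      by simp_all
    moreover have "m - 2 = - 1 - int n" using m by simp
    ultimately show ?thesis using assms by simp
  qed
qed

lemma carlitz_f_eq_carlitz_sol:
  fixes q x s :: "'a::field"
  assumes "q \<noteq> 0" "s \<noteq> 0"
  shows "carlitz_f q n x s = carlitz_sol q x s 0 1 n"
proof -
  have "(THE g. g 0 = 0 \<and> g 1 = 1 \<and> solves_carlitz_rec q x s g) = carlitz_sol q x s 0 1"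
  proof (rule the_equality)
    fix g assume "g 0 = 0 \<and> g 1 = 1 \<and> solves_carlitz_rec q x s g"
    then show "g = carlitz_sol q x s 0 1"
      using solves_carlitz_rec_unique[OF assms _ solves_carlitz_rec_carlitz_sol[OF assms]] by simp
  qed (simp add: solves_carlitz_rec_carlitz_sol[OF assms])
  then show ?thesis unfolding carlitz_f_def solves_carlitz_rec_def by simp
qed

lemma
  fixes q x s :: "'a::field"
  assumes "q \<noteq> 0" "s \<noteq> 0"
  shows solves_carlitz_rec_carlitz_f: "solves_carlitz_rec q x s (\<lambda>n. carlitz_f q n x s)"
    and carlitz_f_0: "carlitz_f q 0 x s = 0"
    and carlitz_f_1: "carlitz_f q 1 x s = 1"
  using solves_carlitz_rec_carlitz_sol[OF assms] by (simp_all add: carlitz_f_eq_carlitz_sol[OF assms])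

lemma solves_carlitz_rec_lincomb:
  assumes "solves_carlitz_rec q x s g" "solves_carlitz_rec q x s h"
  shows "solves_carlitz_rec q x s (\<lambda>n. a * g n + b * h n)"
  unfolding solves_carlitz_rec_def
proof
  fix m
  show "a * g m + b * h m = x * (a * g (m - 1) + b * h (m - 1)) +
          q powi (m - 2) * s * (a * g (m - 2) + b * h (m - 2))"
    unfolding solves_carlitz_recD[OF assms(1), of m] solves_carlitz_recD[OF assms(2), of m]
    by (simp add: algebra_simps)
qed

lemma solves_carlitz_rec_eq_lincomb:
  fixes q x s :: "'a::field"
  assumes "q \<noteq> 0" "s \<noteq> 0" and "solves_carlitz_rec q x s g"
  shows "g n = g 1 * carlitz_f q n x s + g 0 * carlitz_sol q x s 1 0 n"
proof -
  have "g = (\<lambda>n. g 1 * carlitz_f q n x s + g 0 * carlitz_sol q x s 1 0 n)"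
    using assms solves_carlitz_rec_lincomb[OF solves_carlitz_rec_carlitz_f solves_carlitz_rec_carlitz_sol]
    by (intro solves_carlitz_rec_unique) (simp_all add: carlitz_f_0 carlitz_f_1)
  then show ?thesis by (rule fun_cong)
qed

lemma solves_carlitz_rec_shift:
  fixes q x s :: "'a::field"
  assumes "q \<noteq> 0" and "solves_carlitz_rec q x (q ^ a * s) g"
  shows "solves_carlitz_rec q x s (\<lambda>n. g (n - int a))"
  unfolding solves_carlitz_rec_def
proof
  fix m
  have "q powi (m - int a - 2) * q ^ a = q powi (m - 2)"
    using power_int_add[of q "m - int a - 2" "int a"] assms(1) by simp
  then show "g (m - int a) = x * g (m - 1 - int a) + q powi (m - 2) * s * g (m - 2 - int a)"
    using solves_carlitz_recD[OF assms(2), of "m - int a"] by (simp add: algebra_simps)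
qed

lemma casoratian_carlitz_rec:
  assumes g: "solves_carlitz_rec q x s g" and h: "solves_carlitz_rec q x s h"
  shows "g (int N) * h (int N + 1) - g (int N + 1) * h (int N) =
         (- s) ^ N * q ^ (N choose 2) * (g 0 * h 1 - g 1 * h 0)"
proof (induction N)
  case 0
  then show ?case by (simp add: binomial_eq_0)
next
  case (Suc N)
  have G: "g (int N + 2) = x * g (int N + 1) + q ^ N * s * g (int N)"
    and H: "h (int N + 2) = x * h (int N + 1) + q ^ N * s * h (int N)"
    using solves_carlitz_recD[OF g, of "int N + 2"] solves_carlitz_recD[OF h, of "int N + 2"]
    by (simp_all add: add.commute)
  have "g (int (Suc N)) * h (int (Suc N) + 1) - g (int (Suc N) + 1) * h (int (Suc N))
      = g (int N + 1) * h (int N + 2) - g (int N + 2) * h (int N + 1)"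
    by (simp add: ac_simps)
  also have "\<dots> = - (q ^ N * s) * (g (int N) * h (int N + 1) - g (int N + 1) * h (int N))"
    unfolding G H by (simp add: algebra_simps)
  also have "\<dots> = (- s) ^ Suc N * q ^ (Suc N choose 2) * (g 0 * h 1 - g 1 * h 0)"
    unfolding Suc by (simp add: choose_reduce_nat numeral_2_eq_2 power_add algebra_simps)
  finally show ?case .
qed

definition det2 :: "('b \<Rightarrow> 'a::comm_ring) \<Rightarrow> ('b \<Rightarrow> 'a) \<Rightarrow> 'b \<Rightarrow> 'b \<Rightarrow> 'a" where
  "det2 a b j m = a j * b m - a m * b j"

lemma det2_swap: "det2 a b m j = - det2 a b j m"
  by (simp add: det2_def)

lemma sum_det2_mult_div_prod_det2:
  fixes a b :: "'b \<Rightarrow> 'a::field"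
  assumes "finite S" "p \<in> S" and nz: "\<And>j. j \<in> S \<Longrightarrow> j \<noteq> p \<Longrightarrow> det2 a b j p \<noteq> 0"
  shows "(\<Sum>j\<in>S. det2 a b j p * T j / (\<Prod>m\<in>S - {j}. det2 a b j m))
       = (\<Sum>j\<in>S - {p}. T j / (\<Prod>m\<in>S - {p} - {j}. det2 a b j m))"
proof -
  have "(\<Sum>j\<in>S. det2 a b j p * T j / (\<Prod>m\<in>S - {j}. det2 a b j m))
      = (\<Sum>j\<in>S - {p}. det2 a b j p * T j / (\<Prod>m\<in>S - {j}. det2 a b j m))"
    using assms(1,2) by (subst sum.remove[of S p]) (auto simp: det2_def)
  also have "\<dots> = (\<Sum>j\<in>S - {p}. T j / (\<Prod>m\<in>S - {p} - {j}. det2 a b j m))"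
  proof (rule sum.cong[OF refl])
    fix j assume j: "j \<in> S - {p}"
    have "(\<Prod>m\<in>S - {j}. det2 a b j m) = det2 a b j p * (\<Prod>m\<in>S - {j} - {p}. det2 a b j m)"
      using assms(1,2) j by (intro prod.remove) auto
    also have "S - {j} - {p} = S - {p} - {j}" by blast
    finally show "det2 a b j p * T j / (\<Prod>m\<in>S - {j}. det2 a b j m)
             = T j / (\<Prod>m\<in>S - {p} - {j}. det2 a b j m)"
      using nz j by simp
  qed
  finally show ?thesis .
qed

text \<open>Lagrange interpolation in homogeneous form: \<open>k + 2\<close> points \<open>(a j, b j)\<close> in general
  position annihilate every binary form of degree \<open>k\<close>, in particular
  \<open>(a j X + b j Y)\<^sup>k\<close>. Induction on \<open>k\<close>: write the linear form as a combination of
  \<open>det2 a b j p\<close> and \<open>det2 a b j r\<close>, each of which cancels one point.\<close>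

lemma sum_power_div_prod_det2_eq_0:
  fixes a b :: "'b \<Rightarrow> 'a::field"
  assumes "finite S" "card S = k + 2"
    and "\<And>j m. j \<in> S \<Longrightarrow> m \<in> S \<Longrightarrow> j \<noteq> m \<Longrightarrow> det2 a b j m \<noteq> 0"
  shows "(\<Sum>j\<in>S. (a j * X + b j * Y) ^ k / (\<Prod>m\<in>S - {j}. det2 a b j m)) = 0"
  using assms
proof (induction k arbitrary: S)
  case 0
  then have "card S = 2" by simp
  then obtain p r where S: "S = {p, r}" "p \<noteq> r" by (auto simp: card_2_iff)
  then have "{p, r} - {p} = {r}" "{p, r} - {r} = {p}" by auto
  with S show ?case by (simp add: det2_swap[of a b r p] divide_minus_right)
next
  case (Suc k)
  obtain p where p: "p \<in> S"
    using Suc.prems(2) by fastforce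
  have "card (S - {p}) = k + 2"
    using Suc.prems(1,2) p by simp
  then obtain r where r: "r \<in> S" "r \<noteq> p"
    by (metis Diff_iff card.empty empty_iff insertI1 nat.distinct(1) add_2_eq_Suc' ex_in_conv)
  define D where "D = det2 a b p r"
  have "D \<noteq> 0" using Suc.prems(3) p r unfolding D_def by auto
  define \<alpha> where "\<alpha> = - (X * a r + Y * b r)"
  define \<beta> where "\<beta> = X * a p + Y * b p"
  have "D * (a j * X + b j * Y) = \<alpha> * det2 a b j p + \<beta> * det2 a b j r" for j
    unfolding \<alpha>_def \<beta>_def D_def det2_def by (simp add: algebra_simps)
  then have lin: "a j * X + b j * Y = (\<alpha> * det2 a b j p + \<beta> * det2 a b j r) / D" for j
    using \<open>D \<noteq> 0\<close> by (simp add: field_simps)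
  define T where "T j = (a j * X + b j * Y) ^ k" for j
  have IH: "(\<Sum>j\<in>S - {t}. T j / (\<Prod>m\<in>S - {t} - {j}. det2 a b j m)) = 0" if "t \<in> S" for t
    unfolding T_def using Suc.prems that by (intro Suc.IH) auto
  have "(\<Sum>j\<in>S. (a j * X + b j * Y) ^ Suc k / (\<Prod>m\<in>S - {j}. det2 a b j m))
      = (\<alpha> * (\<Sum>j\<in>S. det2 a b j p * T j / (\<Prod>m\<in>S - {j}. det2 a b j m))
      + \<beta> * (\<Sum>j\<in>S. det2 a b j r * T j / (\<Prod>m\<in>S - {j}. det2 a b j m))) / D"
    unfolding sum_distrib_left sum.distrib[symmetric] sum_divide_distrib
  proof (rule sum.cong[OF refl])
    fix j
    have "(a j * X + b j * Y) ^ Suc k = (\<alpha> * det2 a b j p + \<beta> * det2 a b j r) / D * T j"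
      unfolding T_def power_Suc by (subst (1) lin) (rule refl)
    then show "(a j * X + b j * Y) ^ Suc k / (\<Prod>m\<in>S - {j}. det2 a b j m)
      = (\<alpha> * (det2 a b j p * T j / (\<Prod>m\<in>S - {j}. det2 a b j m))
      + \<beta> * (det2 a b j r * T j / (\<Prod>m\<in>S - {j}. det2 a b j m))) / D"
      by (simp add: add_divide_distrib algebra_simps)
  qed
  also have "\<dots> = 0"
    using Suc.prems p r IH
    by (simp add: sum_det2_mult_div_prod_det2)
  finally show ?case .
qed

lemma real_choose_two: "real (n choose 2) = real n * (real n - 1) / 2"
proof (induction n)
  case (Suc n)
  have "Suc n choose 2 = (n choose 2) + n"
    by (simp add: choose_reduce_nat numeral_2_eq_2)
  then show ?case using Suc by (simp add: field_simps)
qed simp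

lemma sum_choose_two_mult:
  assumes "l > 0"
  shows "(\<Sum>m=0..j. (m * l) choose 2) + l * (j choose 2) * ((4 * j + 1) * l - 3) div 6
       = j * ((j * l) choose 2)"
proof -
  define T where "T j = l * (j choose 2) * ((4 * j + 1) * l - 3)" for j
  have real_T: "real (T j) = real l * real (j choose 2) * ((4 * real j + 1) * real l - 3)" for j
  proof (cases "j = 0")
    case False
    then have "5 * 1 \<le> (4 * j + 1) * l" using assms by (intro mult_le_mono) auto
    then have "real ((4 * j + 1) * l - 3) = (4 * real j + 1) * real l - 3"
      by (simp add: of_nat_diff algebra_simps)
    then show ?thesis unfolding T_def of_nat_mult by simp
  qed (simp add: T_def)
  have "6 * (\<Sum>m=0..j. real ((m * l) choose 2)) + real (T j) = 6 * real j * real ((j * l) choose 2)"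
    by (induction j) (simp_all add: real_T real_choose_two field_simps)
  then have "real (6 * (\<Sum>m=0..j. (m * l) choose 2) + T j) = real (6 * (j * ((j * l) choose 2)))"
    by simp
  then have "6 * (\<Sum>m=0..j. (m * l) choose 2) + T j = 6 * (j * ((j * l) choose 2))"
    by (simp only: of_nat_eq_iff)
  moreover have "S + T div 6 = J" if "6 * S + T = 6 * J" for S T J :: nat
  proof -
    have "T = 6 * (J - S)" "S \<le> J" using that by simp_all
    then show ?thesis by simp
  qed
  ultimately show ?thesis unfolding T_def by blast
qed

definition casoratian_factor :: "'a::comm_ring_1 \<Rightarrow> 'a \<Rightarrow> nat \<Rightarrow> 'a" where
  "casoratian_factor q s N = (- s) ^ N * q ^ (N choose 2)"

lemma casoratian_factor_nonzero:
  fixes q s :: "'a::field"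
  shows "q \<noteq> 0 \<Longrightarrow> s \<noteq> 0 \<Longrightarrow> casoratian_factor q s N \<noteq> 0"
  by (simp add: casoratian_factor_def)

definition carlitz_coeff :: "'a::field \<Rightarrow> 'a \<Rightarrow> nat \<Rightarrow> nat \<Rightarrow> 'a" where
  "carlitz_coeff q s l j = (-1) ^ (j + l * (j choose 2)) *
     (q ^ ((l * (j choose 2) * ((4 * j + 1) * l - 3)) div 6) * s ^ (l * (j choose 2)))"

lemma carlitz_coeff_mult_prod_casoratian_factor:
  fixes q s :: "'a::field"
  assumes "l > 0"
  shows "carlitz_coeff q s l j * (\<Prod>m=0..j. casoratian_factor q s (m * l))
       = (-1) ^ j * casoratian_factor q s (j * l) ^ j"
proof -
  define E where "E = (l * (j choose 2) * ((4 * j + 1) * l - 3)) div 6"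
  define C where "C = l * (j choose 2)"
  have s_exp: "(\<Sum>m=0..j. m * l) + C = j * (j * l)"
    unfolding C_def by (induction j) (simp_all add: choose_reduce_nat numeral_2_eq_2 algebra_simps)
  have q_exp: "(\<Sum>m=0..j. (m * l) choose 2) + E = j * ((j * l) choose 2)"
    unfolding E_def using assms by (rule sum_choose_two_mult)
  have "(\<Prod>m=0..j. casoratian_factor q s (m * l))
      = (- s) ^ (\<Sum>m=0..j. m * l) * q ^ (\<Sum>m=0..j. (m * l) choose 2)"
    by (simp add: casoratian_factor_def prod.distrib power_sum)
  then have "(-1) ^ (j + C) * (q ^ E * s ^ C) * (\<Prod>m=0..j. casoratian_factor q s (m * l))
      = (-1) ^ j * (((-1) ^ C * s ^ C) * (- s) ^ (\<Sum>m=0..j. m * l))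
          * (q ^ E * q ^ (\<Sum>m=0..j. (m * l) choose 2))"
    by (simp add: power_add mult_ac)
  also have "\<dots> = (-1) ^ j * (- s) ^ (C + (\<Sum>m=0..j. m * l)) * q ^ (E + (\<Sum>m=0..j. (m * l) choose 2))"
    unfolding power_add power_mult_distrib[of "-1" s C, symmetric] by simp
  also have "\<dots> = (-1) ^ j * (- s) ^ (j * (j * l)) * q ^ (j * ((j * l) choose 2))"
    unfolding add.commute[of C] add.commute[of E] s_exp q_exp ..
  also have "\<dots> = (-1) ^ j * casoratian_factor q s (j * l) ^ j"
    unfolding casoratian_factor_def power_mult_distrib power_mult[symmetric] by (simp add: ac_simps)
  finally show ?thesis unfolding carlitz_coeff_def E_def C_def .
qed

definition carlitz_shift :: "'a::field \<Rightarrow> 'a \<Rightarrow> 'a \<Rightarrow> nat \<Rightarrow> int \<Rightarrow> 'a" where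
  "carlitz_shift q x s a n = carlitz_f q (n - int a) x (q ^ a * s)"

lemma solves_carlitz_rec_carlitz_shift:
  fixes q x s :: "'a::field"
  assumes "q \<noteq> 0" "s \<noteq> 0"
  shows "solves_carlitz_rec q x s (carlitz_shift q x s a)"
  unfolding carlitz_shift_def
  using assms by (intro solves_carlitz_rec_shift solves_carlitz_rec_carlitz_f) simp_all

definition carlitz_shift_det :: "'a::field \<Rightarrow> 'a \<Rightarrow> 'a \<Rightarrow> nat \<Rightarrow> nat \<Rightarrow> nat \<Rightarrow> 'a" where
  "carlitz_shift_det q x s l =
     det2 (\<lambda>j. carlitz_shift q x s (j * l) 1) (\<lambda>j. carlitz_shift q x s (j * l) 0)"

lemma carlitz_shift_det_swap: "carlitz_shift_det q x s l m j = - carlitz_shift_det q x s l j m"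
  unfolding carlitz_shift_det_def by (rule det2_swap)

text \<open>Evaluate the Casoratian of the \<open>j\<close>-th and \<open>m\<close>-th shifted sequences at \<open>m l\<close>, where
  the second one takes the values \<open>0, 1\<close>.\<close>

lemma casoratian_factor_mult_carlitz_shift_det:
  fixes q x s :: "'a::field"
  assumes "q \<noteq> 0" "s \<noteq> 0" "j \<le> m"
  shows "casoratian_factor q s (m * l) * carlitz_shift_det q x s l j m
         = - carlitz_f q (int ((m - j) * l)) x (q ^ (j * l) * s)"
proof -
  let ?g = "carlitz_shift q x s (j * l)" and ?h = "carlitz_shift q x s (m * l)"
  have "?g (int (m * l)) * ?h (int (m * l) + 1) - ?g (int (m * l) + 1) * ?h (int (m * l))
      = casoratian_factor q s (m * l) * (?g 0 * ?h 1 - ?g 1 * ?h 0)"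
    unfolding casoratian_factor_def
    by (rule casoratian_carlitz_rec[OF solves_carlitz_rec_carlitz_shift[OF assms(1,2)]
          solves_carlitz_rec_carlitz_shift[OF assms(1,2)]])
  moreover have "?h (int (m * l)) = 0" "?h (int (m * l) + 1) = 1"
    using assms(1,2) by (simp_all add: carlitz_shift_def carlitz_f_0 carlitz_f_1)
  moreover have "?g (int (m * l)) = carlitz_f q (int ((m - j) * l)) x (q ^ (j * l) * s)"
    using assms(3) by (simp add: carlitz_shift_def of_nat_diff diff_mult_distrib)
  ultimately show ?thesis by (simp add: carlitz_shift_det_def det2_def algebra_simps)
qed

lemma carlitz_shift_det_nonzero:
  fixes q x s :: "'a::field"
  assumes "q \<noteq> 0" "s \<noteq> 0" "l > 0"
    and nonzero: "\<And>a m. m > 0 \<Longrightarrow> carlitz_f q (int m) x (q ^ a * s) \<noteq> 0"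
    and "j \<noteq> m"
  shows "carlitz_shift_det q x s l j m \<noteq> 0"
proof -
  have less: "carlitz_shift_det q x s l j m \<noteq> 0" if "j < m" for j m
  proof -
    have "carlitz_f q (int ((m - j) * l)) x (q ^ (j * l) * s) \<noteq> 0"
      using that \<open>l > 0\<close> by (intro nonzero) simp
    then show ?thesis
      using casoratian_factor_mult_carlitz_shift_det[OF assms(1,2) less_imp_le[OF that], where x = x and l = l]
      by auto
  qed
  show ?thesis
  proof (cases "j < m")
    case False
    with \<open>j \<noteq> m\<close> have "carlitz_shift_det q x s l m j \<noteq> 0" by (intro less) simp
    then show ?thesis by (simp add: carlitz_shift_det_swap[of q x s l j m])
  qed (rule less)
qed

lemma carlitz_bracket_denominator_eq:
  fixes q x s :: "'a::field" and j K l :: nat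
  assumes "q \<noteq> 0" "s \<noteq> 0" "j \<le> K"
  defines "w m \<equiv> casoratian_factor q s (m * l)" and "D \<equiv> carlitz_shift_det q x s l"
  shows "(\<Prod>i=1..j. carlitz_f q (int (i * l)) x (q ^ ((j - i) * l) * s)) *
           (\<Prod>i=1..K - j. carlitz_f q (int (i * l)) x (q ^ (j * l) * s))
         = (-1) ^ (K - j) * w j ^ j * (\<Prod>m=j+1..K. w m) * (\<Prod>m\<in>{0..K} - {j}. D j m)"
proof -
  have "(\<Prod>i=1..j. carlitz_f q (int (i * l)) x (q ^ ((j - i) * l) * s))
      = (\<Prod>m\<in>{0..<j}. carlitz_f q (int ((j - m) * l)) x (q ^ (m * l) * s))"
    by (rule prod.reindex_bij_witness[of _ "\<lambda>i. j - i" "\<lambda>m. j - m"]) auto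
  also have "\<dots> = (\<Prod>m\<in>{0..<j}. w j * D j m)"
    using casoratian_factor_mult_carlitz_shift_det[OF assms(1,2)]
    by (intro prod.cong) (simp_all add: w_def D_def carlitz_shift_det_swap[of _ _ _ _ j])
  finally have lower: "(\<Prod>i=1..j. carlitz_f q (int (i * l)) x (q ^ ((j - i) * l) * s))
      = w j ^ j * (\<Prod>m\<in>{0..<j}. D j m)"
    by (simp add: prod.distrib)
  have "(\<Prod>i=1..K - j. carlitz_f q (int (i * l)) x (q ^ (j * l) * s))
      = (\<Prod>m\<in>{j+1..K}. carlitz_f q (int ((m - j) * l)) x (q ^ (j * l) * s))"
    by (rule prod.reindex_bij_witness[of _ "\<lambda>m. m - j" "\<lambda>i. i + j"]) auto
  also have "\<dots> = (\<Prod>m\<in>{j+1..K}. - (w m * D j m))"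
    using casoratian_factor_mult_carlitz_shift_det[OF assms(1,2)]
    by (intro prod.cong) (simp_all add: w_def D_def)
  finally have upper: "(\<Prod>i=1..K - j. carlitz_f q (int (i * l)) x (q ^ (j * l) * s))
      = (-1) ^ (K - j) * (\<Prod>m=j+1..K. w m) * (\<Prod>m\<in>{j+1..K}. D j m)"
    by (simp add: prod_uminus prod.distrib)
  have "{0..K} - {j} = {0..<j} \<union> {j+1..K}"
    using assms(3) by auto
  moreover have "(\<Prod>m\<in>{0..<j} \<union> {j+1..K}. D j m) = (\<Prod>m\<in>{0..<j}. D j m) * (\<Prod>m\<in>{j+1..K}. D j m)"
    by (rule prod.union_disjoint) auto
  ultimately have "(\<Prod>m\<in>{0..K} - {j}. D j m) = (\<Prod>m\<in>{0..<j}. D j m) * (\<Prod>m\<in>{j+1..K}. D j m)"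
    by simp
  then show ?thesis
    unfolding lower upper by (simp add: ac_simps)
qed

text \<open>Up to a factor independent of \<open>j\<close>, the coefficients of the identity are the Lagrange
  weights of the points \<open>(carlitz_shift q x s (j l) 1, carlitz_shift q x s (j l) 0)\<close>.\<close>

lemma carlitz_coeff_mult_bracket_eq:
  fixes q x s :: "'a::field"
  assumes "q \<noteq> 0" "s \<noteq> 0" "l > 0" "j \<le> K"
  shows "carlitz_coeff q s l j * carlitz_bracket q K j x s l
       = (-1) ^ K * (\<Prod>i=1..K. carlitz_f q (int (i * l)) x s)
           / (\<Prod>m=0..K. casoratian_factor q s (m * l))
           / (\<Prod>m\<in>{0..K} - {j}. carlitz_shift_det q x s l j m)"
proof -
  define w where "w m = casoratian_factor q s (m * l)" for m
  define Wl where "Wl = (\<Prod>m=0..j. w m)"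
  define Wr where "Wr = (\<Prod>m=j+1..K. w m)"
  define P where "P = (\<Prod>m\<in>{0..K} - {j}. carlitz_shift_det q x s l j m)"
  have nonzero_factors: "Wl \<noteq> 0" "Wr \<noteq> 0" "w j \<noteq> 0"
    unfolding Wl_def Wr_def w_def using assms(1,2) by (simp_all add: casoratian_factor_nonzero)
  have "carlitz_coeff q s l j * Wl = (-1) ^ j * w j ^ j"
    unfolding Wl_def w_def using \<open>l > 0\<close> by (rule carlitz_coeff_mult_prod_casoratian_factor)
  then have coeff_eq: "carlitz_coeff q s l j = (-1) ^ j * w j ^ j / Wl"
    using nonzero_factors by (simp add: field_simps)
  have bracket_eq: "carlitz_bracket q K j x s l
      = (\<Prod>i=1..K. carlitz_f q (int (i * l)) x s) / ((-1) ^ (K - j) * w j ^ j * Wr * P)"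
    unfolding carlitz_bracket_def Wr_def P_def w_def
    using carlitz_bracket_denominator_eq[OF assms(1,2,4)] by simp
  have "{0..K} = {0..j} \<union> {j+1..K}"
    using assms(4) by auto
  then have W_eq: "(\<Prod>m=0..K. w m) = Wl * Wr"
    unfolding Wl_def Wr_def by (subst prod.union_disjoint[symmetric]) auto
  have sign_eq: "(-1) ^ K = ((-1) ^ j * (-1) ^ (K - j) :: 'a)"
    using assms(4) by (simp flip: power_add)
  show ?thesis
    unfolding w_def[symmetric] P_def[symmetric] coeff_eq bracket_eq W_eq sign_eq
    using nonzero_factors by (cases "P = 0") (simp_all add: field_simps)
qed

lemma sum_carlitz_shift_power_div_prod_det_eq_0:
  fixes q x s :: "'a::field"
  assumes "q \<noteq> 0" "s \<noteq> 0" "l > 0"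
    and "\<And>a m. m > 0 \<Longrightarrow> carlitz_f q (int m) x (q ^ a * s) \<noteq> 0"
  shows "(\<Sum>j=0..k+1. carlitz_shift q x s (j * l) n ^ k
           / (\<Prod>m\<in>{0..k+1} - {j}. carlitz_shift_det q x s l j m)) = 0"
proof -
  have "carlitz_shift q x s (j * l) n
      = carlitz_shift q x s (j * l) 1 * carlitz_f q n x s + carlitz_shift q x s (j * l) 0 * carlitz_sol q x s 1 0 n"
    for j
    using assms(1,2) by (intro solves_carlitz_rec_eq_lincomb solves_carlitz_rec_carlitz_shift)
  then show ?thesis
    unfolding carlitz_shift_det_def
    using carlitz_shift_det_nonzero[OF assms, unfolded carlitz_shift_det_def]
    by (simp only:) (rule sum_power_div_prod_det2_eq_0; simp)
qed

theorem sum_carlitz_coeff_mult_bracket_mult_shift_power_eq_0: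
  fixes q x s :: "'a::field" and k l :: nat and n :: int
  assumes "q \<noteq> 0" "s \<noteq> 0" "l > 0"
    and "\<And>a m. m > 0 \<Longrightarrow> carlitz_f q (int m) x (q ^ a * s) \<noteq> 0"
  shows "(\<Sum>j=0..k+1. carlitz_coeff q s l j * carlitz_bracket q (k + 1) j x s l *
            carlitz_shift q x s (j * l) n ^ k) = 0"
proof -
  define C where "C = (-1) ^ (k + 1) * (\<Prod>i=1..k+1. carlitz_f q (int (i * l)) x s)
                        / (\<Prod>m=0..k+1. casoratian_factor q s (m * l))"
  have "(\<Sum>j=0..k+1. carlitz_coeff q s l j * carlitz_bracket q (k + 1) j x s l *
          carlitz_shift q x s (j * l) n ^ k)
      = C * (\<Sum>j=0..k+1. carlitz_shift q x s (j * l) n ^ k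
              / (\<Prod>m\<in>{0..k+1} - {j}. carlitz_shift_det q x s l j m))"
    unfolding sum_distrib_left C_def
    using carlitz_coeff_mult_bracket_eq[OF assms(1-3)] by (intro sum.cong) simp_all
  also have "\<dots> = 0"
    using sum_carlitz_shift_power_div_prod_det_eq_0[OF assms] by simp
  finally show ?thesis .
qed

definition rf_of_poly :: "int poly poly poly \<Rightarrow> rf" where
  "rf_of_poly p = Fract p 1"

lemma rf_of_poly_add: "rf_of_poly (p + r) = rf_of_poly p + rf_of_poly r"
  and rf_of_poly_mult: "rf_of_poly (p * r) = rf_of_poly p * rf_of_poly r"
  and rf_of_poly_1 [simp]: "rf_of_poly 1 = 1"
  and rf_of_poly_eq_0_iff [simp]: "rf_of_poly p = 0 \<longleftrightarrow> p = 0"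
  by (simp_all add: rf_of_poly_def One_fract_def Zero_fract_def eq_fract)

lemma rf_of_poly_power: "rf_of_poly (p ^ n) = rf_of_poly p ^ n"
  by (induction n) (simp_all add: rf_of_poly_mult)

definition q_poly :: "int poly poly poly" where "q_poly = [:0, 1:]"
definition s_poly :: "int poly poly poly" where "s_poly = [:[:0, 1:]:]"
definition x_poly :: "int poly poly poly" where "x_poly = [:[:[:0, 1:]:]:]"

lemma qv_eq: "qv = rf_of_poly q_poly"
  and sv_eq: "sv = rf_of_poly s_poly"
  and xv_eq: "xv = rf_of_poly x_poly"
  by (simp_all add: qv_def sv_def xv_def rf_of_poly_def q_poly_def s_poly_def x_poly_def)

lemma qv_nonzero: "qv \<noteq> 0" and sv_nonzero: "sv \<noteq> 0"
  by (simp_all add: qv_eq sv_eq q_poly_def s_poly_def)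

text \<open>Modulo \<open>s\<close> the recurrence is \<open>f(n) = x f(n - 1)\<close>, so \<open>f(m + 1) \<equiv> x\<^sup>m\<close>; this
  survives any substitution \<open>s \<mapsto> q\<^sup>a s\<close>.\<close>

lemma carlitz_f_rf_eq_x_power_plus_s_mult:
  "\<exists>P. carlitz_f qv (int (Suc m)) xv (qv ^ a * sv) = rf_of_poly (x_poly ^ m + s_poly * P)"
proof -
  let ?f = "\<lambda>n. carlitz_f qv n xv (qv ^ a * sv)"
  have rec: "solves_carlitz_rec qv xv (qv ^ a * sv) ?f"
    using qv_nonzero sv_nonzero by (intro solves_carlitz_rec_carlitz_f) simp_all
  have "(\<exists>P. ?f (int (Suc m)) = rf_of_poly (x_poly ^ m + s_poly * P)) \<and>
        (\<exists>P. ?f (int (Suc m) + 1) = rf_of_poly (x_poly ^ Suc m + s_poly * P))"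
  proof (induction m)
    case 0
    have "?f 0 = 0" "?f 1 = 1"
      using qv_nonzero sv_nonzero by (simp_all add: carlitz_f_0 carlitz_f_1)
    moreover have "?f 2 = xv * ?f 1 + qv powi 0 * (qv ^ a * sv) * ?f 0"
      using solves_carlitz_recD[OF rec, of 2] by simp
    ultimately show ?case
      by (intro conjI exI[of _ 0]) (simp_all add: xv_eq)
  next
    case (Suc m)
    then obtain P0 P1 where
      P0: "?f (int (Suc m)) = rf_of_poly (x_poly ^ m + s_poly * P0)" and
      P1: "?f (int (Suc m) + 1) = rf_of_poly (x_poly ^ Suc m + s_poly * P1)"
      by blast
    have "int (Suc m) + 2 - 1 = int (Suc m) + 1" by simp
    then have "?f (int (Suc m) + 2) = xv * ?f (int (Suc m) + 1) + qv ^ Suc m * (qv ^ a * sv) * ?f (int (Suc m))"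
      using solves_carlitz_recD[OF rec, of "int (Suc m) + 2"]
      unfolding add_diff_cancel_right' power_int_of_nat by simp
    also have "\<dots> = rf_of_poly (x_poly ^ Suc (Suc m) +
        s_poly * (x_poly * P1 + q_poly ^ Suc m * q_poly ^ a * (x_poly ^ m + s_poly * P0)))"
      unfolding P0 P1 unfolding xv_eq qv_eq sv_eq
      by (simp add: rf_of_poly_add rf_of_poly_mult rf_of_poly_power algebra_simps)
    finally show ?case
      using P1 by (auto simp: add.assoc)
  qed
  then show ?thesis ..
qed

lemma carlitz_f_rf_nonzero:
  assumes "m > 0"
  shows "carlitz_f qv (int m) xv (qv ^ a * sv) \<noteq> 0"
proof -
  obtain m' where m: "m = Suc m'"
    using assms gr0_conv_Suc by blast
  obtain P where P: "carlitz_f qv (int m) xv (qv ^ a * sv) = rf_of_poly (x_poly ^ m' + s_poly * P)"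
    unfolding m using carlitz_f_rf_eq_x_power_plus_s_mult by blast
  have "poly (poly (x_poly ^ m' + s_poly * P) 0) 0 = [:0, 1:] ^ m'"
    by (simp add: x_poly_def s_poly_def poly_power)
  then have "x_poly ^ m' + s_poly * P \<noteq> 0"
    by (metis pCons_eq_0_iff poly_0 power_eq_0_iff zero_neq_one)
  then show ?thesis
    unfolding P rf_of_poly_eq_0_iff .
qed

theorem theorem3:
  fixes k l :: nat and n :: int
  assumes "k > 0" and "l > 0"
  shows "(\<Sum>j=0..k+1.
            (-1) ^ (j + l * (j choose 2)) *
            (qv ^ ((l * (j choose 2) * ((4 * j + 1) * l - 3)) div 6) * sv ^ (l * (j choose 2))) *
            carlitz_bracket qv (k + 1) j xv sv l *
            carlitz_f qv (n - int (j * l)) xv (qv ^ (j * l) * sv) ^ k) = (0::rf)"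
  using sum_carlitz_coeff_mult_bracket_mult_shift_power_eq_0[OF qv_nonzero sv_nonzero
      \<open>l > 0\<close> carlitz_f_rf_nonzero]
  unfolding carlitz_coeff_def carlitz_shift_def .

end
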